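(* The Price by Removal Mechanism is budget balanced, and it assigns all the users of $\bigcup_{m\in M}\hat P(m)$.
   Context: Model: finite sets of users $P$ (costs $c(p)\ge0$), mediators $M$ (the sets $P(m)$ partition $P$), advertisers $A$ (public capacity $u(a)$, a positive integer, and value $v(a)\ge0$); each advertiser $a$ has $u(a)$ slots each of value $v(a)$; $B$ is the set of all slots. $\gamma\ge1$ satisfies $u(a)\le\gamma$ and $|P(m)|\le\gamma$ for all $a,m$. Costs/values are compared using a fixed tie-breaking rule making them all distinct. Canonical assignment $S_c(P',B')$: order slots of $B'$ by decreasing value $b_1,b_2,\dots$ and users of $P'$ by increasing cost $p_1,p_2,\dots$; include $(p_i,b_i)$ for $i\le\min\{|P'|,|B'|\}$ iff $v(b_i)>c(p_i)$; the user at location $i$ is $p_i$. Budget balanced means the total amount charged to advertisers is at least the total amount paid to mediators. Price by Removal Mechanism (on the reported data): (1) for each mediator $m$, if $|S_c(P\setminus P(m),B)|>4\gamma$, let $p_m$ be the user at location $|S_c(P\setminus P(m),B)|-4\gamma$ of $S_c(P\setminus P(m),B)$ and $c_m=c(p_m)$, else $c_m=-\infty$; (2) $\hat P(m)$ = users of $P(m)$ with cost less than $c_m$; (3) run a VCG auction whose items are the users of $\bigcup_m\hat P(m)$ and whose bidders are the advertisers (each valuing each of up to $u(a)$ items at $v(a)$) plus a dummy advertiser of value $\max_m c_m$ and capacity $\sum_m|\hat P(m)|$; (4) charge each non-dummy advertiser her VCG payment; (5) for each user $p$ assigned (to a non-dummy advertiser) by the VCG auction, pay $c_m$ to the mediator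 $m$ of $p$. *)

theory Defs
  imports "HOL-Library.Multiset" "HOL-Library.Extended_Real"
begin

definition slots :: "'a set \<Rightarrow> ('a \<Rightarrow> nat) \<Rightarrow> ('a \<times> nat) set" where
  "slots A u = {(a, j). a \<in> A \<and> j < u a}"

definition slot_vals :: "'a set \<Rightarrow> ('a \<Rightarrow> nat) \<Rightarrow> ('a \<Rightarrow> real) \<Rightarrow> real list" where
  "slot_vals A u v =
     rev (sorted_list_of_multiset (image_mset (\<lambda>(a, j). v a) (mset_set (slots A u))))"

text \<open>The user at (0-based) position i when the users of P' are sorted by increasing cost
  (costs are distinct).  Location k in the paper (1-based) is index k - 1 here.\<close>
definition canon_user :: "('p \<Rightarrow> real) \<Rightarrow> 'p set \<Rightarrow> nat \<Rightarrow> 'p" where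
  "canon_user c P' i = (THE p. p \<in> P' \<and> card {q \<in> P'. c q < c p} = i)"

text \<open>Canonical assignment S_c(P', B') given the decreasing list vs of slot values of B':
  pairs (location index, user) included iff the slot value exceeds the user's cost.\<close>
definition canonical :: "('p \<Rightarrow> real) \<Rightarrow> 'p set \<Rightarrow> real list \<Rightarrow> (nat \<times> 'p) set" where
  "canonical c P' vs =
     {(i, canon_user c P' i) | i. i < min (card P') (length vs) \<and> c (canon_user c P' i) < vs ! i}"

definition feasible :: "'p set \<Rightarrow> 'b set \<Rightarrow> ('b \<Rightarrow> nat) \<Rightarrow> ('p \<Rightarrow> 'b option) \<Rightarrow> bool" where
  "feasible I Bd cap f \<longleftrightarrow>
     (\<forall>p. p \<notin> I \<longrightarrow> f p = None) \<and>
     (\<forall>p \<in> I. \<forall>b. f p = Some b \<longrightarrow> b \<in> Bd) \<and>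
     (\<forall>b \<in> Bd. card {p \<in> I. f p = Some b} \<le> cap b)"

definition welfare :: "'p set \<Rightarrow> ('b \<Rightarrow> real) \<Rightarrow> ('p \<Rightarrow> 'b option) \<Rightarrow> real" where
  "welfare I val f = (\<Sum>p\<in>I. case f p of None \<Rightarrow> 0 | Some b \<Rightarrow> val b)"

definition opt_welfare :: "'p set \<Rightarrow> 'b set \<Rightarrow> ('b \<Rightarrow> nat) \<Rightarrow> ('b \<Rightarrow> real) \<Rightarrow> real" where
  "opt_welfare I Bd cap val = Max (welfare I val ` {f. feasible I Bd cap f})"

definition vcg_alloc :: "'p set \<Rightarrow> 'b set \<Rightarrow> ('b \<Rightarrow> nat) \<Rightarrow> ('b \<Rightarrow> real) \<Rightarrow> ('p \<Rightarrow> 'b option) \<Rightarrow> bool" where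
  "vcg_alloc I Bd cap val f \<longleftrightarrow> feasible I Bd cap f \<and> welfare I val f = opt_welfare I Bd cap val"

definition vcg_payment :: "'p set \<Rightarrow> 'b set \<Rightarrow> ('b \<Rightarrow> nat) \<Rightarrow> ('b \<Rightarrow> real) \<Rightarrow> ('p \<Rightarrow> 'b option) \<Rightarrow> 'b \<Rightarrow> real" where
  "vcg_payment I Bd cap val f b =
     opt_welfare I (Bd - {b}) cap val
     - (welfare I val f - real (card {p \<in> I. f p = Some b}) * val b)"

definition thr :: "('p \<Rightarrow> real) \<Rightarrow> 'p set \<Rightarrow> ('m \<Rightarrow> 'p set) \<Rightarrow> 'a set \<Rightarrow> ('a \<Rightarrow> nat) \<Rightarrow> ('a \<Rightarrow> real)
                   \<Rightarrow> nat \<Rightarrow> 'm \<Rightarrow> ereal" where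
  "thr c P Pm A u v \<gamma> m =
     (let S = canonical c (P - Pm m) (slot_vals A u v) in
      if card S > 4 * \<gamma>
      then ereal (c (canon_user c (P - Pm m) (card S - 4 * \<gamma> - 1)))
      else -\<infinity>)"

definition phat :: "('p \<Rightarrow> real) \<Rightarrow> 'p set \<Rightarrow> ('m \<Rightarrow> 'p set) \<Rightarrow> 'a set \<Rightarrow> ('a \<Rightarrow> nat) \<Rightarrow> ('a \<Rightarrow> real)
                   \<Rightarrow> nat \<Rightarrow> 'm \<Rightarrow> 'p set" where
  "phat c P Pm A u v \<gamma> m = {p \<in> Pm m. ereal (c p) < thr c P Pm A u v \<gamma> m}"

text \<open>Step (3): the VCG auction. Bidders are Inl a (advertisers) and Inr () (dummy).\<close>
definition items :: "('p \<Rightarrow> real) \<Rightarrow> 'p set \<Rightarrow> 'm set \<Rightarrow> ('m \<Rightarrow> 'p set) \<Rightarrow> 'a set \<Rightarrow> ('a \<Rightarrow> nat)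
                   \<Rightarrow> ('a \<Rightarrow> real) \<Rightarrow> nat \<Rightarrow> 'p set" where
  "items c P M Pm A u v \<gamma> = (\<Union>m\<in>M. phat c P Pm A u v \<gamma> m)"

definition bidders :: "'a set \<Rightarrow> ('a + unit) set" where
  "bidders A = Inl ` A \<union> {Inr ()}"

definition bid_cap :: "('p \<Rightarrow> real) \<Rightarrow> 'p set \<Rightarrow> 'm set \<Rightarrow> ('m \<Rightarrow> 'p set) \<Rightarrow> 'a set \<Rightarrow> ('a \<Rightarrow> nat)
                   \<Rightarrow> ('a \<Rightarrow> real) \<Rightarrow> nat \<Rightarrow> 'a + unit \<Rightarrow> nat" where
  "bid_cap c P M Pm A u v \<gamma> b =
     (case b of Inl a \<Rightarrow> u a | Inr _ \<Rightarrow> (\<Sum>m\<in>M. card (phat c P Pm A u v \<gamma> m)))"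

text \<open>The dummy's value is max_m c_m (taken as a supremum in ereal; it is -\<infinity> only when all
  c_m = -\<infinity>, in which case there are no items and the dummy's value is irrelevant).\<close>
definition bid_val :: "('p \<Rightarrow> real) \<Rightarrow> 'p set \<Rightarrow> 'm set \<Rightarrow> ('m \<Rightarrow> 'p set) \<Rightarrow> 'a set \<Rightarrow> ('a \<Rightarrow> nat)
                   \<Rightarrow> ('a \<Rightarrow> real) \<Rightarrow> nat \<Rightarrow> 'a + unit \<Rightarrow> real" where
  "bid_val c P M Pm A u v \<gamma> b =
     (case b of Inl a \<Rightarrow> v a | Inr _ \<Rightarrow> real_of_ereal (SUP m\<in>M. thr c P Pm A u v \<gamma> m))"

definition total_charged :: "('p \<Rightarrow> real) \<Rightarrow> 'p set \<Rightarrow> 'm set \<Rightarrow> ('m \<Rightarrow> 'p set) \<Rightarrow> 'a set \<Rightarrow> ('a \<Rightarrow> nat)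
                   \<Rightarrow> ('a \<Rightarrow> real) \<Rightarrow> nat \<Rightarrow> ('p \<Rightarrow> ('a + unit) option) \<Rightarrow> real" where
  "total_charged c P M Pm A u v \<gamma> f =
     (\<Sum>a\<in>A. vcg_payment (items c P M Pm A u v \<gamma>) (bidders A) (bid_cap c P M Pm A u v \<gamma>)
                          (bid_val c P M Pm A u v \<gamma>) f (Inl a))"

definition total_paid :: "('p \<Rightarrow> real) \<Rightarrow> 'p set \<Rightarrow> 'm set \<Rightarrow> ('m \<Rightarrow> 'p set) \<Rightarrow> 'a set \<Rightarrow> ('a \<Rightarrow> nat)
                   \<Rightarrow> ('a \<Rightarrow> real) \<Rightarrow> nat \<Rightarrow> ('p \<Rightarrow> ('a + unit) option) \<Rightarrow> real" where
  "total_paid c P M Pm A u v \<gamma> f =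
     (\<Sum>m\<in>M. real (card {p \<in> phat c P Pm A u v \<gamma> m. \<exists>a \<in> A. f p = Some (Inl a)})
              * real_of_ereal (thr c P Pm A u v \<gamma> m))"

end

theory Submission
  imports Defs
begin

text \<open>The dummy advertiser bids D = max_m c_m = c_{m*}. Every item costs less than D, so the items
  lie among the users of P - P(m*) cheaper than D together with P(m*); by the choice of the
  location defining c_{m*} there are fewer of them than slots of value above D. Hence an optimal
  allocation sells every item to an advertiser, since otherwise an unsold item could be moved to a
  free slot worth more than D. Each advertiser's Clarke payment is at least D per item she wins,
  because her items could instead go to the dummy, while each mediator receives c_m \<le> D per
  sold item.\<close>

definition cost_rank :: "('p \<Rightarrow> real) \<Rightarrow> 'p set \<Rightarrow> 'p \<Rightarrow> nat" where
  "cost_rank c P' p = card {q \<in> P'. c q < c p}"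

lemma canon_user_via_cost_rank: "canon_user c P' i = (THE p. p \<in> P' \<and> cost_rank c P' p = i)"
  unfolding canon_user_def cost_rank_def ..

lemma cost_rank_strict_mono:
  assumes "finite P'" "p \<in> P'" "c p < c p'"
  shows "cost_rank c P' p < cost_rank c P' p'"
  unfolding cost_rank_def using assms by (intro psubset_card_mono) auto

lemma cost_rank_less_card:
  assumes "finite P'" "p \<in> P'"
  shows "cost_rank c P' p < card P'"
  unfolding cost_rank_def using assms by (intro psubset_card_mono) auto

lemma bij_betw_cost_rank:
  assumes fin: "finite P'" and inj: "inj_on c P'"
  shows "bij_betw (cost_rank c P') P' {..<card P'}"
proof -
  have rank_inj: "inj_on (cost_rank c P') P'"
  proof (rule inj_onI)
    fix p q assume pq: "p \<in> P'" "q \<in> P'" "cost_rank c P' p = cost_rank c P' q"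
    then have "\<not> c p < c q" "\<not> c q < c p"
      using cost_rank_strict_mono[OF fin] by (metis less_irrefl)+
    then show "p = q" using inj pq(1,2) by (metis inj_on_contraD linorder_neqE_linordered_idom)
  qed
  moreover have "cost_rank c P' ` P' \<subseteq> {..<card P'}"
    using cost_rank_less_card[OF fin] by auto
  ultimately show ?thesis
    by (simp add: bij_betw_def card_image card_subset_eq)
qed

lemma
  assumes fin: "finite P'" and inj: "inj_on c P'" and i: "i < card P'"
  shows canon_user_mem: "canon_user c P' i \<in> P'"
    and cost_rank_canon_user: "cost_rank c P' (canon_user c P' i) = i"
proof -
  have bij: "bij_betw (cost_rank c P') P' {..<card P'}" by (rule bij_betw_cost_rank[OF fin inj])
  then obtain p where p: "p \<in> P'" "cost_rank c P' p = i"
    using i by (metis bij_betw_def imageE lessThan_iff)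
  have "canon_user c P' i = p"
    unfolding canon_user_via_cost_rank
    using p bij by (intro the_equality) (auto simp: bij_betw_def inj_on_def)
  then show "canon_user c P' i \<in> P'" "cost_rank c P' (canon_user c P' i) = i" using p by auto
qed

lemma canon_user_mono:
  assumes fin: "finite P'" and inj: "inj_on c P'" and ij: "i \<le> j" "j < card P'"
  shows "c (canon_user c P' i) \<le> c (canon_user c P' j)"
proof (rule ccontr)
  assume "\<not> ?thesis"
  then have "cost_rank c P' (canon_user c P' j) < cost_rank c P' (canon_user c P' i)"
    using ij by (intro cost_rank_strict_mono[OF fin] canon_user_mem[OF fin inj]) auto
  then show False using ij by (simp add: cost_rank_canon_user[OF fin inj])
qed

lemma sorted_slot_vals: "sorted_wrt (\<ge>) (slot_vals A u v)"
  unfolding slot_vals_def sorted_wrt_rev by simp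

lemma finite_slots: "finite A \<Longrightarrow> finite (slots A u)"
proof -
  assume "finite A"
  moreover have "slots A u = (SIGMA a:A. {..<u a})" unfolding slots_def by auto
  ultimately show ?thesis by simp
qed

lemma card_slot_vals_greater:
  assumes "finite A"
  shows "card {i. i < length (slot_vals A u v) \<and> d < slot_vals A u v ! i}
         = (\<Sum>a\<in>{a\<in>A. d < v a}. u a)"
proof -
  have "card {i. i < length (slot_vals A u v) \<and> d < slot_vals A u v ! i}
      = size (mset (filter ((<) d) (slot_vals A u v)))"
    by (simp only: size_mset length_filter_conv_card)
  also have "\<dots> = size (filter_mset ((<) d) (image_mset (\<lambda>(a, j). v a) (mset_set (slots A u))))"
    unfolding slot_vals_def by (simp only: mset_filter mset_rev mset_sorted_list_of_multiset)
  also have "\<dots> = card {s \<in> slots A u. d < (\<lambda>(a, j). v a) s}"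
    using finite_slots[OF assms] by (simp add: filter_mset_image_mset)
  also have "{s \<in> slots A u. d < (\<lambda>(a, j). v a) s} = (SIGMA a:{a\<in>A. d < v a}. {..<u a})"
    unfolding slots_def by auto
  finally show ?thesis using assms by simp
qed

text \<open>The last assigned location j of the canonical assignment satisfies c(p_j) < v(b_j); since
  slot values decrease and user costs increase, every user at a location i \<le> j is cheaper than the
  j + 1 most valuable slots, and j + 1 is at least the size of the assignment.\<close>
lemma card_canonical_le_slots_above:
  assumes fin: "finite P'" and inj: "inj_on c P'" and sorted: "sorted_wrt (\<ge>) vs"
    and i: "i < card (canonical c P' vs)"
  shows "i < card P'"
    and "card (canonical c P' vs) \<le> card {l. l < length vs \<and> c (canon_user c P' i) < vs ! l}"
proof -
  define J where "J = {l. l < min (card P') (length vs) \<and> c (canon_user c P' l) < vs ! l}"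
  have "canonical c P' vs = (\<lambda>l. (l, canon_user c P' l)) ` J"
    unfolding canonical_def J_def by auto
  then have card_J: "card (canonical c P' vs) = card J"
    by (simp add: card_image inj_on_def)
  have fin_J: "finite J" unfolding J_def by simp
  define j where "j = Max J"
  have "J \<noteq> {}" using i card_J by auto
  then have j: "j < card P'" "j < length vs" "c (canon_user c P' j) < vs ! j"
    using Max_in[OF fin_J] unfolding j_def J_def by auto
  have "J \<subseteq> {..j}" using fin_J j_def by auto
  then have card_le: "card (canonical c P' vs) \<le> Suc j"
    using card_J card_mono[of "{..j}" J] by simp
  then show "i < card P'" using i j by simp
  have "{..j} \<subseteq> {l. l < length vs \<and> c (canon_user c P' i) < vs ! l}"
  proof
    fix l assume "l \<in> {..j}"
    then have "vs ! j \<le> vs ! l" "l < length vs"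
      using sorted_wrt_nth_less[OF sorted, of l j] j by (auto simp: le_less)
    moreover have "c (canon_user c P' i) \<le> c (canon_user c P' j)"
      using canon_user_mono[OF fin inj] i card_le j by simp
    ultimately show "l \<in> {l. l < length vs \<and> c (canon_user c P' i) < vs ! l}" using j by auto
  qed
  then have "Suc j \<le> card {l. l < length vs \<and> c (canon_user c P' i) < vs ! l}"
    using card_mono[of _ "{..j}"] by fastforce
  with card_le show "card (canonical c P' vs) \<le> card {l. l < length vs \<and> c (canon_user c P' i) < vs ! l}"
    by simp
qed

lemma finite_feasible:
  assumes "finite I" "finite Bd"
  shows "finite {f. feasible I Bd cap f}"
proof (rule finite_subset)
  show "{f. feasible I Bd cap f} \<subseteq>
        {f. \<forall>x. (x \<in> I \<longrightarrow> f x \<in> insert None (Some ` Bd)) \<and> (x \<notin> I \<longrightarrow> f x = None)}"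
    unfolding feasible_def by (auto intro: option.exhaust)
  show "finite {f. \<forall>x. (x \<in> I \<longrightarrow> f x \<in> insert None (Some ` Bd)) \<and> (x \<notin> I \<longrightarrow> f x = None)}"
    using assms by (intro finite_set_of_finite_funs) auto
qed

lemma welfare_le_opt_welfare:
  assumes "finite I" "finite Bd" "feasible I Bd cap f"
  shows "welfare I val f \<le> opt_welfare I Bd cap val"
  unfolding opt_welfare_def using assms finite_feasible[OF assms(1,2)] by (intro Max_ge) auto

lemma finite_bidders: "finite A \<Longrightarrow> finite (bidders A)"
  unfolding bidders_def by simp

lemma card_assigned_to:
  assumes "finite I" "finite H" "inj_on g H"
  shows "card {q \<in> I. \<exists>a\<in>H. f q = Some (g a)} = (\<Sum>a\<in>H. card {q \<in> I. f q = Some (g a)})"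
proof -
  have "{q \<in> I. \<exists>a\<in>H. f q = Some (g a)} = (\<Union>a\<in>H. {q \<in> I. f q = Some (g a)})" by auto
  also have "card \<dots> = (\<Sum>a\<in>H. card {q \<in> I. f q = Some (g a)})"
    using assms by (intro card_UN_disjoint) (auto dest: inj_onD)
  finally show ?thesis .
qed

lemma feasible_fun_upd:
  assumes feas: "feasible I Bd cap f" and "p \<in> I" "b \<in> Bd"
    and free: "card {q \<in> I. f q = Some b} < cap b" and "finite I"
  shows "feasible I Bd cap (f(p := Some b))"
  unfolding feasible_def
proof (intro conjI allI ballI impI)
  fix b' assume b': "b' \<in> Bd"
  show "card {q \<in> I. (f(p := Some b)) q = Some b'} \<le> cap b'"
  proof (cases "b' = b")
    case True
    have "{q \<in> I. (f(p := Some b)) q = Some b'} \<subseteq> insert p {q \<in> I. f q = Some b}"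
      using True by auto
    then have "card {q \<in> I. (f(p := Some b)) q = Some b'} \<le> card (insert p {q \<in> I. f q = Some b})"
      using \<open>finite I\<close> by (intro card_mono) auto
    also have "\<dots> \<le> Suc (card {q \<in> I. f q = Some b})"
      using \<open>finite I\<close> by (simp add: card_insert_if)
    finally show ?thesis using free True by simp
  next
    case False
    then have "{q \<in> I. (f(p := Some b)) q = Some b'} \<subseteq> {q \<in> I. f q = Some b'}" by auto
    then have "card {q \<in> I. (f(p := Some b)) q = Some b'} \<le> card {q \<in> I. f q = Some b'}"
      using \<open>finite I\<close> by (intro card_mono) auto
    then show ?thesis using feas b' unfolding feasible_def by fastforce
  qed
qed (use assms in \<open>auto simp: feasible_def split: if_splits\<close>)

lemma welfare_fun_upd:
  assumes "finite I" "p \<in> I"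
  shows "welfare I val (f(p := Some b))
         = welfare I val f - (case f p of None \<Rightarrow> 0 | Some b' \<Rightarrow> val b') + val b"
proof -
  let ?w = "\<lambda>h q. case h q of None \<Rightarrow> 0 | Some b' \<Rightarrow> val b'"
  have "(\<Sum>q\<in>I - {p}. ?w (f(p := Some b)) q) = (\<Sum>q\<in>I - {p}. ?w f q)"
    by (intro sum.cong) auto
  then show ?thesis
    unfolding welfare_def using assms by (simp add: sum.remove)
qed

lemma welfare_redirect:
  assumes "finite I"
  shows "welfare I val (\<lambda>q. if f q = Some b then Some b' else f q)
         = welfare I val f + real (card {q \<in> I. f q = Some b}) * (val b' - val b)"
proof -
  let ?w = "\<lambda>h q. case h q of None \<Rightarrow> 0 | Some b' \<Rightarrow> val b'"
  have "welfare I val (\<lambda>q. if f q = Some b then Some b' else f q)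
        = (\<Sum>q\<in>I. ?w f q + (if f q = Some b then val b' - val b else 0))"
    unfolding welfare_def by (intro sum.cong) auto
  also have "\<dots> = welfare I val f + (\<Sum>q\<in>I. if f q = Some b then val b' - val b else 0)"
    unfolding welfare_def by (simp add: sum.distrib)
  finally show ?thesis
    using assms by (simp add: sum.inter_filter[symmetric])
qed

lemma feasible_redirect:
  assumes feas: "feasible I Bd cap f" and "b' \<in> Bd" "b' \<noteq> b"
    and room: "card I \<le> cap b'" and "finite I"
  shows "feasible I (Bd - {b}) cap (\<lambda>q. if f q = Some b then Some b' else f q)"
  unfolding feasible_def
proof (intro conjI allI ballI impI)
  fix b'' assume b'': "b'' \<in> Bd - {b}"
  show "card {q \<in> I. (if f q = Some b then Some b' else f q) = Some b''} \<le> cap b''"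
  proof (cases "b'' = b'")
    case True
    have "card {q \<in> I. (if f q = Some b then Some b' else f q) = Some b''} \<le> card I"
      using \<open>finite I\<close> by (intro card_mono) auto
    then show ?thesis using room True by simp
  next
    case False
    then have "{q \<in> I. (if f q = Some b then Some b' else f q) = Some b''} = {q \<in> I. f q = Some b''}"
      using b'' by auto
    then show ?thesis using feas b'' unfolding feasible_def by auto
  qed
qed (use assms in \<open>auto simp: feasible_def split: if_splits\<close>)

text \<open>An item not sold to an advertiser could be moved to a free slot of an advertiser valuing
  more than the dummy, strictly increasing the welfare.\<close>
lemma vcg_alloc_assigns_all:
  assumes finI: "finite I" and finA: "finite A"
    and vcg: "vcg_alloc I (bidders A) cap val f"
    and dummy_nonneg: "0 \<le> val (Inr ())"
    and enough: "card I \<le> (\<Sum>a\<in>{a\<in>A. val (Inr ()) < val (Inl a)}. cap (Inl a))"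
  shows "\<forall>p\<in>I. \<exists>a\<in>A. f p = Some (Inl a)"
proof (rule ccontr)
  assume "\<not> ?thesis"
  then obtain p where p: "p \<in> I" "\<forall>a\<in>A. f p \<noteq> Some (Inl a)" by auto
  define H where "H = {a\<in>A. val (Inr ()) < val (Inl a)}"
  have feas: "feasible I (bidders A) cap f"
    and opt: "welfare I val f = opt_welfare I (bidders A) cap val"
    using vcg unfolding vcg_alloc_def by auto
  have "{q \<in> I. \<exists>a\<in>H. f q = Some (Inl a)} \<subseteq> I - {p}" using p H_def by auto
  then have "card {q \<in> I. \<exists>a\<in>H. f q = Some (Inl a)} < card I"
    using finI p(1) by (meson card_Diff1_less card_mono finite_Diff le_less_trans)
  then have "(\<Sum>a\<in>H. card {q \<in> I. f q = Some (Inl a)}) < (\<Sum>a\<in>H. cap (Inl a))"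
    using enough card_assigned_to[OF finI _ inj_Inl, of H f] finA unfolding H_def by simp
  then obtain a where a: "a \<in> H" "card {q \<in> I. f q = Some (Inl a)} < cap (Inl a)"
    by (meson not_less sum_mono)
  then have "Inl a \<in> bidders A" "val (Inr ()) < val (Inl a)" unfolding H_def bidders_def by auto
  have "(case f p of None \<Rightarrow> 0 | Some b \<Rightarrow> val b) \<le> val (Inr ())"
  proof (cases "f p")
    case (Some b)
    then have "b = Inr ()" using feas p unfolding feasible_def bidders_def by blast
    then show ?thesis using Some by simp
  qed (simp add: dummy_nonneg)
  then have gain: "welfare I val f < welfare I val (f(p := Some (Inl a)))"
    using welfare_fun_upd[OF finI p(1), of val f "Inl a"] \<open>val (Inr ()) < val (Inl a)\<close> by simp
  have "feasible I (bidders A) cap (f(p := Some (Inl a)))"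
    using feasible_fun_upd[OF feas p(1) \<open>Inl a \<in> bidders A\<close> a(2) finI] .
  then have "welfare I val (f(p := Some (Inl a))) \<le> welfare I val f"
    using welfare_le_opt_welfare[OF finI finite_bidders[OF finA]] opt by simp
  with gain show False by simp
qed

text \<open>Redirecting the items of advertiser a to the dummy is feasible without a, so the Clarke
  pivot term is at least the welfare of that redirection.\<close>
lemma vcg_payment_ge_dummy_value:
  assumes finI: "finite I" and finA: "finite A"
    and vcg: "vcg_alloc I (bidders A) cap val f"
    and dummy_cap: "card I \<le> cap (Inr ())"
  shows "real (card {q \<in> I. f q = Some (Inl a)}) * val (Inr ())
         \<le> vcg_payment I (bidders A) cap val f (Inl a)"
proof -
  let ?g = "\<lambda>q. if f q = Some (Inl a) then Some (Inr ()) else f q"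
  have "feasible I (bidders A - {Inl a}) cap ?g"
    using vcg dummy_cap finI unfolding vcg_alloc_def
    by (intro feasible_redirect) (auto simp: bidders_def)
  then have "welfare I val ?g \<le> opt_welfare I (bidders A - {Inl a}) cap val"
    using welfare_le_opt_welfare finI finite_bidders[OF finA] by blast
  then show ?thesis
    unfolding vcg_payment_def welfare_redirect[OF finI] by (simp add: algebra_simps)
qed

locale price_by_removal =
  fixes c :: "'p \<Rightarrow> real" and P :: "'p set" and M :: "'m set" and Pm :: "'m \<Rightarrow> 'p set"
    and A :: "'a set" and u :: "'a \<Rightarrow> nat" and v :: "'a \<Rightarrow> real" and \<gamma> :: nat
  assumes finite_P: "finite P" and finite_M: "finite M" and finite_A: "finite A"
    and costs_nonneg: "p \<in> P \<Longrightarrow> 0 \<le> c p"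
    and Pm_subset: "m \<in> M \<Longrightarrow> Pm m \<subseteq> P"
    and Pm_disjoint: "m1 \<in> M \<Longrightarrow> m2 \<in> M \<Longrightarrow> m1 \<noteq> m2 \<Longrightarrow> Pm m1 \<inter> Pm m2 = {}"
    and card_Pm_le: "m \<in> M \<Longrightarrow> card (Pm m) \<le> \<gamma>"
    and inj_cost: "inj_on c P"
begin

abbreviation "threshold \<equiv> thr c P Pm A u v \<gamma>"
abbreviation "Phat \<equiv> phat c P Pm A u v \<gamma>"
abbreviation "Items \<equiv> items c P M Pm A u v \<gamma>"
abbreviation "dummy_value \<equiv> real_of_ereal (SUP m\<in>M. threshold m)"

lemma threshold_bounds:
  assumes "threshold m = ereal d"
  shows "d \<in> c ` (P - Pm m)"
    and "card {q \<in> P - Pm m. c q < d} + 4 * \<gamma>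
         < card {i. i < length (slot_vals A u v) \<and> d < slot_vals A u v ! i}"
proof -
  define P' where "P' = P - Pm m"
  define k where "k = card (canonical c P' (slot_vals A u v))"
  have k: "4 * \<gamma> < k" and d: "d = c (canon_user c P' (k - 4 * \<gamma> - 1))"
    using assms unfolding thr_def Let_def k_def P'_def by (auto split: if_splits)
  have fin: "finite P'" and inj: "inj_on c P'"
    using finite_P inj_cost unfolding P'_def by (auto intro: inj_on_subset)
  have "k - 4 * \<gamma> - 1 < card (canonical c P' (slot_vals A u v))" using k k_def by simp
  note above = card_canonical_le_slots_above[OF fin inj sorted_slot_vals this]
  show "d \<in> c ` (P - Pm m)" using canon_user_mem[OF fin inj above(1)] d P'_def by simp
  have "card {q \<in> P'. c q < d} = k - 4 * \<gamma> - 1"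
    using cost_rank_canon_user[OF fin inj above(1)] d unfolding cost_rank_def by simp
  then show "card {q \<in> P - Pm m. c q < d} + 4 * \<gamma>
         < card {i. i < length (slot_vals A u v) \<and> d < slot_vals A u v ! i}"
    using above(2) k k_def d P'_def by simp
qed

lemma Phat_subset: "Phat m \<subseteq> Pm m"
  unfolding phat_def by auto

lemma finite_Phat: "m \<in> M \<Longrightarrow> finite (Phat m)"
  using Phat_subset Pm_subset finite_P by (meson finite_subset order_trans)

lemma finite_items: "finite Items"
  unfolding items_def using finite_M finite_Phat by blast

lemma card_items: "card Items = (\<Sum>m\<in>M. card (Phat m))"
  unfolding items_def using finite_M finite_Phat Phat_subset Pm_disjoint
  by (intro card_UN_disjoint) blast+

lemma threshold_ne_MInf: "p \<in> Phat m \<Longrightarrow> threshold m \<noteq> -\<infinity>"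
  unfolding phat_def by auto

lemma dummy_value_attained:
  assumes "Items \<noteq> {}"
  obtains ms where "ms \<in> M" "threshold ms = ereal dummy_value"
    and "(SUP m\<in>M. threshold m) = ereal dummy_value"
proof -
  obtain m0 p0 where m0: "m0 \<in> M" "p0 \<in> Phat m0" using assms unfolding items_def by auto
  have "M \<noteq> {}" using m0(1) by auto
  then have "(SUP m\<in>M. threshold m) = Max (threshold ` M)"
    using Max_Sup[of "threshold ` M"] finite_M by simp
  moreover have "Max (threshold ` M) \<in> threshold ` M"
    using Max_in[of "threshold ` M"] finite_M \<open>M \<noteq> {}\<close> by simp
  ultimately obtain ms where ms: "ms \<in> M" "(SUP m\<in>M. threshold m) = threshold ms"
    by (metis imageE)
  have "threshold m0 \<le> threshold ms" using ms m0(1) by (metis SUP_upper)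
  moreover have "threshold m0 \<noteq> -\<infinity>" using threshold_ne_MInf[OF m0(2)] .
  moreover have "threshold ms \<noteq> \<infinity>" unfolding thr_def Let_def by auto
  ultimately have "threshold ms = ereal dummy_value" using ms(2) by (cases "threshold ms") auto
  then show thesis using that ms by simp
qed

lemma dummy_value_nonneg:
  assumes "Items \<noteq> {}"
  shows "0 \<le> dummy_value"
proof -
  obtain ms where "threshold ms = ereal dummy_value" using dummy_value_attained[OF assms] .
  then have "dummy_value \<in> c ` (P - Pm ms)" by (rule threshold_bounds(1))
  then show ?thesis using costs_nonneg by auto
qed

lemma card_items_le_slots_above: "card Items \<le> (\<Sum>a\<in>{a\<in>A. dummy_value < v a}. u a)"
proof (cases "Items = {}")
  case False
  then obtain ms where ms: "ms \<in> M" "threshold ms = ereal dummy_value"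
    and sup: "(SUP m\<in>M. threshold m) = ereal dummy_value"
    by (rule dummy_value_attained)
  have "Items \<subseteq> {q \<in> P - Pm ms. c q < dummy_value} \<union> Pm ms"
  proof
    fix p assume "p \<in> Items"
    then obtain m where m: "m \<in> M" "p \<in> Pm m" "ereal (c p) < threshold m"
      unfolding items_def phat_def by auto
    have "threshold m \<le> ereal dummy_value" using m(1) sup by (metis SUP_upper)
    with m(3) have "ereal (c p) < ereal dummy_value" by (rule less_le_trans)
    then have "c p < dummy_value" by simp
    then show "p \<in> {q \<in> P - Pm ms. c q < dummy_value} \<union> Pm ms" using m Pm_subset by auto
  qed
  then have "card Items \<le> card ({q \<in> P - Pm ms. c q < dummy_value} \<union> Pm ms)"
    using finite_P Pm_subset[OF ms(1)] by (intro card_mono) (auto intro: finite_subset)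
  also have "\<dots> \<le> card {q \<in> P - Pm ms. c q < dummy_value} + \<gamma>"
    using card_Un_le card_Pm_le[OF ms(1)] by (meson add_left_mono order_trans)
  also have "\<dots> < card {i. i < length (slot_vals A u v) \<and> dummy_value < slot_vals A u v ! i}"
    using threshold_bounds(2)[OF ms(2)] by simp
  finally show ?thesis using card_slot_vals_greater[OF finite_A] by simp
qed simp

lemma items_assigned:
  assumes "vcg_alloc Items (bidders A) (bid_cap c P M Pm A u v \<gamma>) (bid_val c P M Pm A u v \<gamma>) f"
  shows "\<forall>p\<in>Items. \<exists>a\<in>A. f p = Some (Inl a)"
proof (cases "Items = {}")
  case False
  show ?thesis
    using vcg_alloc_assigns_all[OF finite_items finite_A assms] dummy_value_nonneg[OF False]
      card_items_le_slots_above
    unfolding bid_val_def bid_cap_def by simp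
qed simp

lemma threshold_le_dummy_value:
  assumes "m \<in> M" "Phat m \<noteq> {}"
  shows "real_of_ereal (threshold m) \<le> dummy_value"
proof -
  obtain p where p: "p \<in> Phat m" using assms(2) by auto
  then have "Items \<noteq> {}" using assms(1) unfolding items_def by auto
  then have "threshold m \<le> ereal dummy_value"
    using assms(1) by (metis dummy_value_attained SUP_upper)
  moreover have "threshold m \<noteq> -\<infinity>" using threshold_ne_MInf[OF p] .
  ultimately show ?thesis by (cases "threshold m") auto
qed

lemma total_paid_le:
  assumes assigned: "\<forall>p\<in>Items. \<exists>a\<in>A. f p = Some (Inl a)"
  shows "total_paid c P M Pm A u v \<gamma> f \<le> real (card Items) * dummy_value"
proof -
  have "total_paid c P M Pm A u v \<gamma> f = (\<Sum>m\<in>M. real (card (Phat m)) * real_of_ereal (threshold m))"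
    unfolding total_paid_def using assigned unfolding items_def
    by (intro sum.cong refl arg_cong2[where f = "(*)"] arg_cong[where f = "\<lambda>n. real (card n)"]) auto
  also have "\<dots> \<le> (\<Sum>m\<in>M. real (card (Phat m)) * dummy_value)"
  proof (intro sum_mono)
    fix m assume "m \<in> M"
    then show "real (card (Phat m)) * real_of_ereal (threshold m) \<le> real (card (Phat m)) * dummy_value"
      using threshold_le_dummy_value[of m] by (cases "Phat m = {}") (simp_all add: mult_left_mono)
  qed
  also have "\<dots> = real (card Items) * dummy_value"
    unfolding card_items by (simp add: sum_distrib_right)
  finally show ?thesis .
qed

lemma total_charged_ge:
  assumes vcg: "vcg_alloc Items (bidders A) (bid_cap c P M Pm A u v \<gamma>) (bid_val c P M Pm A u v \<gamma>) f"
    and assigned: "\<forall>p\<in>Items. \<exists>a\<in>A. f p = Some (Inl a)"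
  shows "real (card Items) * dummy_value \<le> total_charged c P M Pm A u v \<gamma> f"
proof -
  have "{q \<in> Items. \<exists>a\<in>A. f q = Some (Inl a)} = Items" using assigned by auto
  then have "card Items = (\<Sum>a\<in>A. card {q \<in> Items. f q = Some (Inl a)})"
    using card_assigned_to[OF finite_items finite_A inj_Inl, of f] by simp
  then have "real (card Items) * dummy_value
      = (\<Sum>a\<in>A. real (card {q \<in> Items. f q = Some (Inl a)}) * bid_val c P M Pm A u v \<gamma> (Inr ()))"
    by (simp add: bid_val_def sum_distrib_right)
  also have "\<dots> \<le> total_charged c P M Pm A u v \<gamma> f"
    unfolding total_charged_def
    using vcg_payment_ge_dummy_value[OF finite_items finite_A vcg] card_items
    by (intro sum_mono) (simp add: bid_cap_def)
  finally show ?thesis .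
qed

end

theorem corollary7:
  fixes P :: "'p set" and M :: "'m set" and A :: "'a set"
    and c :: "'p \<Rightarrow> real" and Pm :: "'m \<Rightarrow> 'p set"
    and u :: "'a \<Rightarrow> nat" and v :: "'a \<Rightarrow> real" and \<gamma> :: nat
    and f :: "'p \<Rightarrow> ('a + unit) option"
  assumes "finite P" and "finite M" and "finite A"
    and "\<forall>p\<in>P. c p \<ge> 0" and "\<forall>a\<in>A. v a \<ge> 0"
    and "\<forall>m\<in>M. Pm m \<noteq> {} \<and> Pm m \<subseteq> P"
    and "\<forall>m1\<in>M. \<forall>m2\<in>M. m1 \<noteq> m2 \<longrightarrow> Pm m1 \<inter> Pm m2 = {}"
    and "(\<Union>m\<in>M. Pm m) = P"
    and "\<forall>a\<in>A. 0 < u a"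
    and "\<gamma> \<ge> 1" and "\<forall>a\<in>A. u a \<le> \<gamma>" and "\<forall>m\<in>M. card (Pm m) \<le> \<gamma>"
    and "inj_on c P" and "inj_on v A" and "\<forall>p\<in>P. \<forall>a\<in>A. c p \<noteq> v a"
    and "vcg_alloc (items c P M Pm A u v \<gamma>) (bidders A) (bid_cap c P M Pm A u v \<gamma>)
                   (bid_val c P M Pm A u v \<gamma>) f"
  shows "total_charged c P M Pm A u v \<gamma> f \<ge> total_paid c P M Pm A u v \<gamma> f
         \<and> (\<forall>p \<in> items c P M Pm A u v \<gamma>. \<exists>a \<in> A. f p = Some (Inl a))"
proof -
  interpret price_by_removal c P M Pm A u v \<gamma>
    using assms(1-4,6,7,12,13) by unfold_locales auto
  have assigned: "\<forall>p\<in>Items. \<exists>a\<in>A. f p = Some (Inl a)"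
    using items_assigned[OF assms(16)] .
  show ?thesis
    using total_paid_le[OF assigned] total_charged_ge[OF assms(16) assigned] assigned by simp
qed

end
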